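(* For all real $D,R\ge2$, \[ \#\mathcal E(D,R)\ll\frac{D^2R(\log R)^2}{\log D}, \] with an absolute implied constant.
   Context: For $\lambda\in\mathbb F_p^*$, $\rho(\lambda,p)=\min\{rs: r,s\text{ positive integers},\ r\equiv\lambda s\pmod p\}$. For real $D,R\ge2$, $\mathcal E(D,R)$ is the set of primes $p$ for which there exists $\lambda\in\mathbb F_p^*$ of multiplicative order $d$ with $3\le d<D$ and $\rho(\lambda,p)<R$. *)

theory Defs
  imports Complex_Main "HOL-Number_Theory.Number_Theory"
begin

text \<open>Elements of F_p^* are represented by their residues lam with 0 < lam < p.\<close>

definition rho :: "nat \<Rightarrow> nat \<Rightarrow> nat" where
  "rho lam p = (LEAST n. \<exists>r s. 0 < r \<and> 0 < s \<and> [r = lam * s] (mod p) \<and> n = r * s)"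

definition calE :: "real \<Rightarrow> real \<Rightarrow> nat set" where
  "calE D R = {p. prime p \<and> (\<exists>lam. 0 < lam \<and> lam < p \<and>
      3 \<le> ord p lam \<and> real (ord p lam) < D \<and> real (rho lam p) < R)}"

end

theory Submission
  imports Defs
begin

text \<open>If \<open>p > R\<close> lies in \<open>\<E>(D, R)\<close>, witnessed by \<open>\<lambda>\<close> of order \<open>d\<close>, take \<open>r \<equiv> \<lambda> s\<close> with
  \<open>r s = \<rho>(\<lambda>, p) < R\<close>. Then \<open>r, s < p\<close> and \<open>r \<noteq> s\<close> because \<open>\<lambda> \<noteq> 1\<close>, and raising to the
  \<open>d\<close>-th power gives \<open>p | r\<^sup>d - s\<^sup>d\<close>, a nonzero integer of size at most \<open>R\<^sup>d\<close>; moreover \<open>p > d\<close>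
  since \<open>d | p - 1\<close>. A number \<open>N \<le> R\<^sup>d\<close> has at most \<open>d log R / log d\<close> prime factors exceeding
  \<open>d\<close>. Summing over the \<open>O(R log R)\<close> pairs \<open>(r, s)\<close> and over \<open>3 \<le> d < D\<close>, and adding the
  at most \<open>R\<close> primes \<open>p \<le> R\<close>, gives \<open>O(R log\<^sup>2 R \<cdot> D\<^sup>2 / log D)\<close>.\<close>

lemma sum_inverse_le_one_plus_ln:
  "n \<ge> 1 \<Longrightarrow> (\<Sum>k=1..n. 1 / real k) \<le> 1 + ln (real n)"
proof (induction n rule: dec_induct)
  case base
  then show ?case by simp
next
  case (step n)
  have "ln (real n) - ln (real (Suc n)) \<le> (real n - real (Suc n)) / real (Suc n)"
    using step.hyps by (intro ln_diff_le) auto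
  then have "1 / real (Suc n) \<le> ln (real (Suc n)) - ln (real n)"
    by (simp add: field_simps)
  then show ?case
    using step.IH by simp
qed

lemma sum_divide_ln_le:
  fixes D :: real
  assumes "D \<ge> 2"
  shows "(\<Sum>d\<in>{3..<nat \<lceil>D\<rceil>}. real d / ln (real d)) \<le> D\<^sup>2 / ln D"
proof -
  have "real d / ln (real d) \<le> D / ln D" if "d \<in> {3..<nat \<lceil>D\<rceil>}" for d
  proof -
    have d3: "real d \<ge> 3" and dD: "real d < D"
      using that by (auto simp: zless_nat_eq_int_zless less_ceiling_iff)
    have "ln D / D \<le> ln (real d) / real d"
      using exp_le d3 dD by (intro ln_x_over_x_mono) auto
    moreover have "ln (real d) > 0"
      using d3 by simp
    ultimately show ?thesis
      using d3 dD by (simp add: field_simps)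
  qed
  then have "(\<Sum>d\<in>{3..<nat \<lceil>D\<rceil>}. real d / ln (real d)) \<le> real (nat \<lceil>D\<rceil> - 3) * (D / ln D)"
    using sum_mono[where K = "{3..<nat \<lceil>D\<rceil>}" and g = "\<lambda>_. D / ln D"] by simp
  also have "\<dots> \<le> D * (D / ln D)"
  proof (rule mult_right_mono)
    have "real (nat \<lceil>D\<rceil>) < D + 1"
      using assms by linarith
    then show "real (nat \<lceil>D\<rceil> - 3) \<le> D"
      using assms by (cases "3 \<le> nat \<lceil>D\<rceil>") (simp_all add: of_nat_diff)
  qed (use assms in simp)
  finally show ?thesis
    by (simp add: power2_eq_square)
qed

definition pairs_below :: "real \<Rightarrow> (nat \<times> nat) set" where
  "pairs_below R = {(r, s). 0 < r \<and> 0 < s \<and> real (r * s) < R}"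

lemma pairs_below_swap: "(r, s) \<in> pairs_below R \<Longrightarrow> (s, r) \<in> pairs_below R"
  by (simp add: pairs_below_def mult.commute)

lemma pairs_below_less: "(r, s) \<in> pairs_below R \<Longrightarrow> real r < R \<and> real s < R"
  unfolding pairs_below_def by (auto intro: le_less_trans[rotated])

lemma finite_pairs_below: "finite (pairs_below R)"
proof (rule finite_subset)
  show "pairs_below R \<subseteq> {..nat \<lfloor>R\<rfloor>} \<times> {..nat \<lfloor>R\<rfloor>}"
    by (auto dest!: pairs_below_less intro!: le_nat_floor)
qed simp

lemma card_pairs_below_le:
  fixes R :: real
  assumes "R \<ge> 1"
  shows "real (card (pairs_below R)) \<le> R * (1 + ln R)"
proof -
  define n where "n = nat \<lfloor>R\<rfloor>"
  have n1: "n \<ge> 1" and nR: "real n \<le> R"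
    using assms unfolding n_def by linarith+
  let ?Q = "SIGMA r:{1..n}. {1..nat \<lfloor>R / real r\<rfloor>}"
  have "pairs_below R \<subseteq> ?Q"
  proof
    fix x assume "x \<in> pairs_below R"
    then obtain r s where x: "x = (r, s)" "0 < r" "0 < s" "real r * real s < R"
      by (auto simp: pairs_below_def)
    then have "real r \<le> R" "real s \<le> R / real r"
      by (auto simp: field_simps intro: order_trans[of _ "real r * real s"])
    then show "x \<in> ?Q"
      using x unfolding n_def by (auto simp: le_nat_floor)
  qed
  then have "real (card (pairs_below R)) \<le> real (card ?Q)"
    by (intro of_nat_mono card_mono) auto
  also have "\<dots> = (\<Sum>r=1..n. real (nat \<lfloor>R / real r\<rfloor>))"
    by simp
  also have "\<dots> \<le> (\<Sum>r=1..n. R * (1 / real r))"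
    using assms by (intro sum_mono) auto
  also have "\<dots> = R * (\<Sum>r=1..n. 1 / real r)"
    by (simp add: sum_distrib_left)
  also have "\<dots> \<le> R * (1 + ln R)"
  proof -
    have "ln (real n) \<le> ln R"
      using nR n1 by simp
    then show ?thesis
      using sum_inverse_le_one_plus_ln[OF n1] assms by (intro mult_left_mono) auto
  qed
  finally show ?thesis .
qed

definition large_prime_divisors :: "nat \<Rightarrow> nat \<Rightarrow> nat set" where
  "large_prime_divisors d N = {p. prime p \<and> d < p \<and> p dvd N}"

lemma large_prime_divisors_subset: "N > 0 \<Longrightarrow> large_prime_divisors d N \<subseteq> prime_factors N"
  by (auto simp: large_prime_divisors_def prime_factors_dvd)

lemma finite_large_prime_divisors: "N > 0 \<Longrightarrow> finite (large_prime_divisors d N)"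
  using large_prime_divisors_subset finite_subset by blast

lemma power_card_large_prime_divisors_le:
  assumes "N > 0"
  shows "d ^ card (large_prime_divisors d N) \<le> N"
proof -
  let ?S = "large_prime_divisors d N"
  have "(\<Prod>p\<in>?S. p) dvd (\<Prod>p\<in>?S. p ^ multiplicity p N)"
    using assms by (intro prod_dvd_prod dvd_power)
      (auto simp: large_prime_divisors_def prime_multiplicity_gt_zero_iff)
  also have "\<dots> dvd (\<Prod>p\<in>prime_factors N. p ^ multiplicity p N)"
    using assms by (intro prod_dvd_prod_subset large_prime_divisors_subset) auto
  also have "\<dots> = N"
    using prime_factorization_nat[OF assms] by simp
  finally have "(\<Prod>p\<in>?S. p) \<le> N"
    using assms by (auto intro: dvd_imp_le)
  moreover have "d ^ card ?S \<le> (\<Prod>p\<in>?S. p)"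
    using prod_mono[of ?S "\<lambda>_. d" id] by (auto simp: large_prime_divisors_def)
  ultimately show ?thesis
    by linarith
qed

lemma card_large_prime_divisors_le:
  fixes R :: real
  assumes "N > 0" "d \<ge> 2" "R > 0" "real N \<le> R ^ d"
  shows "real (card (large_prime_divisors d N)) \<le> real d * ln R / ln (real d)"
proof -
  let ?k = "card (large_prime_divisors d N)"
  have "real d ^ ?k \<le> R ^ d"
    using power_card_large_prime_divisors_le[OF assms(1), of d] assms(4)
    by (metis of_nat_le_iff of_nat_power order_trans)
  then have "ln (real d ^ ?k) \<le> ln (R ^ d)"
    using assms by (subst ln_le_cancel_iff) auto
  then have "real ?k * ln (real d) \<le> real d * ln R"
    using assms by (simp add: ln_realpow)
  moreover have "ln (real d) > 0"
    using assms by simp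
  ultimately show ?thesis
    by (simp add: field_simps)
qed

lemma card_large_prime_divisors_power_diff_le:
  fixes R :: real
  assumes "s < r" "d \<ge> 2" "real r < R"
  shows "real (card (large_prime_divisors d (r ^ d - s ^ d))) \<le> real d * ln R / ln (real d)"
proof (rule card_large_prime_divisors_le)
  show "0 < r ^ d - s ^ d"
    using assms by (simp add: power_strict_mono)
  have "real (r ^ d - s ^ d) \<le> real r ^ d"
    by (simp flip: of_nat_power)
  also have "\<dots> \<le> R ^ d"
    using assms by (simp add: power_mono)
  finally show "real (r ^ d - s ^ d) \<le> R ^ d" .
qed (use assms in auto)

lemma ord_less_prime:
  fixes p a :: nat
  assumes "prime p" "\<not> p dvd a"
  shows "ord p a < p"
proof -
  have "coprime p a"
    using assms by (simp add: prime_imp_coprime)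
  then have "ord p a dvd p - 1"
    using order_divides_totient totient_prime[OF assms(1)] by metis
  moreover have "p > 1"
    using assms prime_gt_1_nat by blast
  ultimately show ?thesis
    using dvd_imp_le[of "ord p a" "p - 1"] by linarith
qed

lemma cong_pow_ord:
  fixes r a s n :: nat
  assumes "[r = a * s] (mod n)"
  shows "[r ^ ord n a = s ^ ord n a] (mod n)"
proof -
  have "[r ^ ord n a = a ^ ord n a * s ^ ord n a] (mod n)"
    using cong_pow[OF assms, of "ord n a"] by (simp add: power_mult_distrib)
  also have "[a ^ ord n a * s ^ ord n a = 1 * s ^ ord n a] (mod n)"
    by (intro cong_mult ord cong_refl)
  finally show ?thesis
    by simp
qed

lemma rho_attained:
  assumes "0 < lam"
  obtains r s where "0 < r" "0 < s" "[r = lam * s] (mod p)" "rho lam p = r * s"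
proof -
  let ?Q = "\<lambda>n. \<exists>r s. 0 < r \<and> 0 < s \<and> [r = lam * s] (mod p) \<and> n = r * s"
  have "?Q (lam * 1)"
    using assms by (intro exI[of _ lam] exI[of _ 1]) auto
  then have "?Q (rho lam p)"
    unfolding rho_def by (rule LeastI)
  then show ?thesis
    using that by blast
qed

lemma rho_witness_power_diff_dvd:
  fixes R :: real
  assumes p: "prime p" and lam: "0 < lam" and ord: "ord p lam \<noteq> 1"
    and rho: "real (rho lam p) < R" and pR: "R < real p"
  obtains a b where "(a, b) \<in> pairs_below R" "b < a" "p dvd a ^ ord p lam - b ^ ord p lam"
proof -
  let ?d = "ord p lam"
  obtain r s where rs: "0 < r" "0 < s" "[r = lam * s] (mod p)" "rho lam p = r * s"
    using rho_attained[OF lam] by blast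
  have rs_pair: "(r, s) \<in> pairs_below R"
    using rs rho by (simp add: pairs_below_def)
  then have "s < p"
    using pR pairs_below_less by fastforce
  then have "coprime s p"
    using rs(2) p by (metis coprime_commute dvd_imp_le not_le prime_imp_coprime)
  have "r \<noteq> s"
  proof
    assume "r = s"
    then have "[1 * s = lam * s] (mod p)"
      using rs(3) by simp
    then have "[lam = 1] (mod p)"
      using cong_mult_rcancel_nat[OF \<open>coprime s p\<close>] cong_sym by blast
    then show False
      using ord ord_eq_Suc_0_iff[of p lam] by simp
  qed
  have rs_cong: "[r ^ ?d = s ^ ?d] (mod p)"
    using rs(3) by (rule cong_pow_ord)
  have dvd_diff: "p dvd a ^ ?d - b ^ ?d" if "b < a" "[a ^ ?d = b ^ ?d] (mod p)" for a b
  proof -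
    have "b ^ ?d \<le> a ^ ?d"
      using that by (simp add: power_mono)
    then show ?thesis
      using that cong_altdef_nat cong_sym by blast
  qed
  consider "s < r" | "r < s"
    using \<open>r \<noteq> s\<close> by linarith
  then show ?thesis
  proof cases
    case 1
    show ?thesis
      by (rule that[OF rs_pair 1 dvd_diff[OF 1 rs_cong]])
  next
    case 2
    show ?thesis
      by (rule that[OF pairs_below_swap[OF rs_pair] 2 dvd_diff[OF 2 cong_sym[OF rs_cong]]])
  qed
qed

definition power_difference_primes :: "real \<Rightarrow> real \<Rightarrow> nat set" where
  "power_difference_primes D R =
     (\<Union>(d, r, s) \<in> {3..<nat \<lceil>D\<rceil>} \<times> {(r, s) \<in> pairs_below R. s < r}.
        large_prime_divisors d (r ^ d - s ^ d))"

lemma calE_subset: "calE D R \<subseteq> {1..nat \<lfloor>R\<rfloor>} \<union> power_difference_primes D R"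
proof
  fix p assume "p \<in> calE D R"
  then obtain lam where p: "prime p" and lam: "0 < lam" "lam < p"
    and d3: "3 \<le> ord p lam" and dD: "real (ord p lam) < D" and rho: "real (rho lam p) < R"
    unfolding calE_def by blast
  let ?d = "ord p lam"
  show "p \<in> {1..nat \<lfloor>R\<rfloor>} \<union> power_difference_primes D R"
  proof (cases "real p \<le> R")
    case True
    then show ?thesis
      using prime_ge_1_nat[OF p] by (auto intro: le_nat_floor)
  next
    case False
    then have "R < real p"
      by simp
    moreover have "?d \<noteq> 1"
      using d3 by simp
    ultimately obtain a b where ab: "(a, b) \<in> pairs_below R" "b < a" "p dvd a ^ ?d - b ^ ?d"
      using rho_witness_power_diff_dvd[OF p lam(1) _ rho] by blast
    have "?d < p"
      using lam by (intro ord_less_prime[OF p]) (auto dest: dvd_imp_le)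
    then have "p \<in> large_prime_divisors ?d (a ^ ?d - b ^ ?d)"
      using p ab(3) by (simp add: large_prime_divisors_def)
    moreover have "(?d, a, b) \<in> {3..<nat \<lceil>D\<rceil>} \<times> {(r, s) \<in> pairs_below R. s < r}"
      using ab(1,2) d3 dD by (simp add: zless_nat_eq_int_zless less_ceiling_iff)
    ultimately show ?thesis
      unfolding power_difference_primes_def by (intro UnI2 UN_I) auto
  qed
qed

lemma finite_power_difference_primes: "finite (power_difference_primes D R)"
proof -
  have "finite ({3..<nat \<lceil>D\<rceil>} \<times> {(r, s) \<in> pairs_below R. s < r})"
    by (intro finite_cartesian_product finite_subset[OF _ finite_pairs_below]) auto
  moreover have "r ^ d - s ^ d > 0" if "s < r" "d \<ge> 3" for r s d :: nat
    using that by (simp add: power_strict_mono)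
  ultimately show ?thesis
    unfolding power_difference_primes_def
    by (intro finite_UN_I) (auto intro: finite_large_prime_divisors)
qed

lemma card_power_difference_primes_le:
  fixes D R :: real
  assumes "D \<ge> 2" "R \<ge> 2"
  shows "real (card (power_difference_primes D R)) \<le> R * (1 + ln R) * (ln R * (D\<^sup>2 / ln D))"
proof -
  define T where "T = {3..<nat \<lceil>D\<rceil>}"
  define P where "P = {(r, s) \<in> pairs_below R. s < r}"
  define h where "h d = real d * ln R / ln (real d)" for d :: nat
  have h_nonneg: "h d \<ge> 0" for d
    using assms by (cases "d = 0") (simp_all add: h_def)
  have finP: "finite P"
    unfolding P_def by (rule finite_subset[OF _ finite_pairs_below]) auto
  have card_le_h: "real (card (large_prime_divisors d (r ^ d - s ^ d))) \<le> h d"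
    if "d \<in> T" "(r, s) \<in> P" for d r s
    using that pairs_below_less unfolding h_def
    by (intro card_large_prime_divisors_power_diff_le) (auto simp: T_def P_def)
  have "real (card (power_difference_primes D R))
      \<le> (\<Sum>(d, r, s)\<in>T \<times> P. real (card (large_prime_divisors d (r ^ d - s ^ d))))"
    unfolding power_difference_primes_def T_def [symmetric] P_def [symmetric]
    using card_UN_le[of "T \<times> P" "\<lambda>(d, r, s). large_prime_divisors d (r ^ d - s ^ d)"] finP
    by (simp add: T_def case_prod_unfold of_nat_sum [symmetric] del: of_nat_sum)
  also have "\<dots> \<le> (\<Sum>(d, rs)\<in>T \<times> P. h d)"
    using card_le_h by (intro sum_mono) auto
  also have "\<dots> = real (card P) * (\<Sum>d\<in>T. h d)"
    by (simp add: sum.cartesian_product [symmetric] sum_distrib_right mult.commute)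
  also have "\<dots> \<le> R * (1 + ln R) * (ln R * (D\<^sup>2 / ln D))"
  proof (rule mult_mono)
    have "card P \<le> card (pairs_below R)"
      using finite_pairs_below by (auto simp: P_def intro: card_mono)
    then show "real (card P) \<le> R * (1 + ln R)"
      using card_pairs_below_le[of R] assms by simp
    have "(\<Sum>d\<in>T. h d) = ln R * (\<Sum>d\<in>T. real d / ln (real d))"
      unfolding h_def sum_distrib_left by (intro sum.cong) auto
    also have "\<dots> \<le> ln R * (D\<^sup>2 / ln D)"
      using sum_divide_ln_le[OF assms(1)] assms unfolding T_def by (intro mult_left_mono) auto
    finally show "(\<Sum>d\<in>T. h d) \<le> ln R * (D\<^sup>2 / ln D)" .
  qed (use assms h_nonneg in \<open>auto intro: sum_nonneg\<close>)
  finally show ?thesis .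
qed

lemma finite_calE: "finite (calE D R)"
  using calE_subset finite_power_difference_primes by (meson finite_Un finite_atLeastAtMost finite_subset)

lemma card_calE_le:
  fixes D R :: real
  assumes "D \<ge> 2" "R \<ge> 2"
  shows "real (card (calE D R)) \<le> R + R * (1 + ln R) * (ln R * (D\<^sup>2 / ln D))"
proof -
  have "card (calE D R) \<le> card ({1..nat \<lfloor>R\<rfloor>} \<union> power_difference_primes D R)"
    using calE_subset finite_power_difference_primes by (intro card_mono) auto
  also have "\<dots> \<le> nat \<lfloor>R\<rfloor> + card (power_difference_primes D R)"
    using card_Un_le[of "{1..nat \<lfloor>R\<rfloor>}"] by simp
  finally have "real (card (calE D R)) \<le> real (nat \<lfloor>R\<rfloor>) + real (card (power_difference_primes D R))"
    by (simp only: of_nat_add [symmetric] of_nat_le_iff)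
  moreover have "real (nat \<lfloor>R\<rfloor>) \<le> R"
    using assms by linarith
  ultimately show ?thesis
    using card_power_difference_primes_le[OF assms] by linarith
qed

lemma ln_ge_one_half: "x \<ge> 2 \<Longrightarrow> 1 / 2 \<le> ln (x :: real)"
  using exp_half_le2 by (subst ln_ge_iff) auto

lemma one_le_square_div_ln: "D \<ge> 2 \<Longrightarrow> 1 \<le> D\<^sup>2 / ln (D :: real)"
proof -
  assume D: "D \<ge> 2"
  have "ln D \<le> D - 1" "D * 1 \<le> D * D"
    using D by (auto intro: ln_le_minus_one mult_left_mono)
  then have "ln D \<le> D\<^sup>2"
    by (simp add: power2_eq_square)
  then show ?thesis
    using D by simp
qed

lemma add_mult_le_seven_mult:
  fixes R L X :: real
  assumes "R \<ge> 0" "1 \<le> 2 * L" "1 \<le> X"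
  shows "R + R * (1 + L) * (L * X) \<le> 7 * (R * L\<^sup>2 * X)"
proof -
  have "1 * 1 \<le> (2 * L)\<^sup>2 * X"
    using assms by (intro mult_mono one_le_power) auto
  moreover have "L * X * 1 \<le> L * X * (2 * L)"
    using assms by (intro mult_left_mono) auto
  ultimately have "1 + L * X + L\<^sup>2 * X \<le> 7 * L\<^sup>2 * X"
    by (simp add: power2_eq_square algebra_simps)
  then show ?thesis
    using assms mult_left_mono[of _ _ R] by (fastforce simp: algebra_simps power2_eq_square)
qed

theorem lemma4p5:
  shows "\<exists>C>0. \<forall>D R :: real. D \<ge> 2 \<longrightarrow> R \<ge> 2 \<longrightarrow>
     finite (calE D R) \<and>
     real (card (calE D R)) \<le> C * (D^2 * R * (ln R)^2 / ln D)"
proof (intro exI[of _ 7] conjI allI impI)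
  fix D R :: real
  assume D: "D \<ge> 2" and R: "R \<ge> 2"
  show "finite (calE D R)"
    by (rule finite_calE)
  have "R + R * (1 + ln R) * (ln R * (D\<^sup>2 / ln D)) \<le> 7 * (R * (ln R)\<^sup>2 * (D\<^sup>2 / ln D))"
    using R ln_ge_one_half[OF R] one_le_square_div_ln[OF D]
    by (intro add_mult_le_seven_mult) auto
  with card_calE_le[OF D R] show "real (card (calE D R)) \<le> 7 * (D^2 * R * (ln R)^2 / ln D)"
    by (simp add: algebra_simps)
qed simp

end
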